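(* Let $S,C,D,\Delta\ge1$, $\mathcal{X}\subseteq\mathbb{R}^D$ nonempty convex compact, and $f_h$, $h=1,\dots,C$, convex continuously differentiable with gradients $g_h$ satisfying $\|g_h(x)\|\le L_h$ on $\mathcal{X}$. Suppose the weights $W_{i,k}[J,h]\ge0$ are nonnegative and satisfy SLC with constant $M>0$, the server graph is complete (consensus step $x^I_{0,k+1}=\frac1S\sum_{J=1}^S x^J_{\Delta,k}$), and all servers start from the same point $x^J_{0,0}=x_{0,0}\in\mathcal{X}$; let $x_{0,k}$ be the common value of $x^J_{0,k}$. Then for all $y\in\mathcal{X}$ and all $k\ge0$, $$\|x_{0,k+1}-y\|^2\le\|x_{0,k}-y\|^2-\tfrac{2M}{S}\alpha_k\big(f(x_{0,k})-f(y)\big)+\tfrac1S\alpha_k^2C_0^2,$$ where $C_0^2=\sum_{J=1}^S\sum_{i=1}^{\Delta}\Big[\big(\sum_{h=1}^C W_{i-1,k}[J,h]L_h\big)^2+2\big(\sum_{h=1}^C W_{i-1,k}[J,h]L_h\big)\big(\sum_{t=1}^{i-1}\sum_{l=1}^C W_{t-1,k}[J,l]L_l\big)\Big].$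
   Context: $\mathcal{P}_{\mathcal{X}}$ is Euclidean projection onto $\mathcal{X}$; $f=\sum_{h=1}^Cf_h$; step sizes $\alpha_k>0$. Weight matrices $W_{i,k}\in\mathbb{R}^{S\times C}$ ($0\le i\le\Delta-1$, $k\ge0$). Symmetric Learning Condition (SLC): there is $M>0$ with $\sum_{i=1}^{\Delta}\sum_{J=1}^S W_{i-1,k}[J,h]=M$ for all $k\ge0$ and all $h$. Iteration: for each $k\ge0$ and $i=1,\dots,\Delta$, $x^J_{i,k}=\mathcal{P}_{\mathcal{X}}\big[x^J_{i-1,k}-\alpha_k\sum_{h=1}^C W_{i-1,k}[J,h]\,g_h(x^J_{i-1,k})\big]$, followed by the consensus step. *)

theory Defs
  imports "HOL-Analysis.Analysis"
begin

definition proj :: "'a::euclidean_space set \<Rightarrow> 'a \<Rightarrow> 'a" where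
  "proj X z = closest_point X z"

definition C0sq ::
  "nat \<Rightarrow> nat \<Rightarrow> nat \<Rightarrow> (nat \<Rightarrow> nat \<Rightarrow> nat \<Rightarrow> nat \<Rightarrow> real) \<Rightarrow> (nat \<Rightarrow> real) \<Rightarrow> nat \<Rightarrow> real" where
  "C0sq S C \<Delta> W L k =
     (\<Sum>J=1..S. \<Sum>i=1..\<Delta>.
        (\<Sum>h=1..C. W (i-1) k J h * L h)^2
        + 2 * (\<Sum>h=1..C. W (i-1) k J h * L h)
            * (\<Sum>t=1..i-1. \<Sum>l=1..C. W (t-1) k J l * L l))"

end

theory Submission
  imports Defs
begin

text \<open>All iterates of a round stay within \<open>\<alpha>\<^sub>k (b\<^sub>1 + \<dots> + b\<^sub>i)\<close> of the common starting
  point \<open>c\<close>, where \<open>b\<^sub>i = \<Sum>\<^sub>h W\<^sub>i\<^sub>-\<^sub>1[J,h] L\<^sub>h\<close>, so convexity charges every step to the function gap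
  at \<open>c\<close> instead of at the current iterate, at the price of the cross terms
  \<open>2 b\<^sub>i (b\<^sub>1 + \<dots> + b\<^sub>i\<^sub>-\<^sub>1)\<close> of \<open>C\<^sub>0\<^sup>2\<close>. Averaging over the servers does not increase the mean
  squared distance to \<open>y\<close>, and SLC collects the weighted function gaps into
  \<open>M (f(c) - f(y))\<close>.\<close>

lemma convex_on_gradient_inequality:
  fixes f :: "'a::real_inner \<Rightarrow> real"
  assumes convex: "convex_on UNIV f" and deriv: "(f has_derivative (\<lambda>v. G \<bullet> v)) (at z)"
  shows "f z + G \<bullet> (y - z) \<le> f y"
proof -
  define \<phi> where "\<phi> t = f (z + t *\<^sub>R (y - z))" for t :: real
  have "convex_on UNIV \<phi>"
    unfolding convex_on_def \<phi>_def
  proof (intro conjI allI impI ballI)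
    fix a b u v :: real assume "0 \<le> u" "0 \<le> v" "u + v = 1"
    then have "z + (u * a + v * b) *\<^sub>R (y - z)
        = u *\<^sub>R (z + a *\<^sub>R (y - z)) + v *\<^sub>R (z + b *\<^sub>R (y - z))"
      by (simp add: algebra_simps scaleR_add_left[symmetric] del: scaleR_add_left)
    then show "f (z + (u *\<^sub>R a + v *\<^sub>R b) *\<^sub>R (y - z))
        \<le> u * f (z + a *\<^sub>R (y - z)) + v * f (z + b *\<^sub>R (y - z))"
      using convex \<open>0 \<le> u\<close> \<open>0 \<le> v\<close> \<open>u + v = 1\<close> unfolding convex_on_def by simp
  qed simp
  moreover have "((\<lambda>t. z + t *\<^sub>R (y - z)) has_derivative (\<lambda>t. t *\<^sub>R (y - z))) (at 0)"
    by (auto intro!: derivative_eq_intros)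
  then have "(\<phi> has_derivative (\<lambda>t. G \<bullet> (t *\<^sub>R (y - z)))) (at 0)"
    unfolding \<phi>_def using has_derivative_compose[of "\<lambda>t. z + t *\<^sub>R (y - z)" _ 0 UNIV f] deriv
    by (simp only: add_0_right scaleR_zero_left)
  then have "(\<phi> has_field_derivative (G \<bullet> (y - z))) (at 0)"
    by (simp add: has_field_derivative_def mult.commute[of _ "G \<bullet> (y - z)"])
  ultimately have "\<phi> 1 - \<phi> 0 \<ge> G \<bullet> (y - z)"
    using convex_on_imp_above_tangent[of UNIV \<phi> 0 1] by simp
  then show ?thesis by (simp add: \<phi>_def)
qed

lemma gradient_inner_ge_gap:
  fixes f :: "'a::real_inner \<Rightarrow> real"
  assumes convex: "convex_on UNIV f" and deriv: "\<And>u. (f has_derivative (\<lambda>v. g u \<bullet> v)) (at u)"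
    and bound: "norm (g c) \<le> L"
  shows "f c - f y - L * norm (z - c) \<le> g z \<bullet> (z - y)"
proof -
  have at_z: "f z + g z \<bullet> (y - z) \<le> f y"
    by (rule convex_on_gradient_inequality[OF convex deriv])
  have at_c: "f c + g c \<bullet> (z - c) \<le> f z"
    by (rule convex_on_gradient_inequality[OF convex deriv])
  have "\<bar>g c \<bullet> (z - c)\<bar> \<le> L * norm (z - c)"
    using Cauchy_Schwarz_ineq2[of "g c" "z - c"] bound
    by (meson mult_right_mono norm_ge_zero order_trans)
  moreover have "g z \<bullet> (z - y) = - (g z \<bullet> (y - z))"
    by (simp add: inner_diff_right)
  ultimately show ?thesis using at_z at_c by linarith
qed

lemma proj_in:
  assumes "closed X" "X \<noteq> {}"
  shows "proj X z \<in> X"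
  unfolding proj_def using assms by (rule closest_point_in_set)

lemma proj_self: "z \<in> X \<Longrightarrow> proj X z = z"
  unfolding proj_def by (rule closest_point_self)

lemma proj_nonexpansive:
  assumes "convex X" "closed X" "X \<noteq> {}"
  shows "norm (proj X u - proj X v) \<le> norm (u - v)"
  using closest_point_lipschitz[OF assms] unfolding proj_def by (simp add: dist_norm)

lemma proj_step_dist_le:
  fixes X :: "'a::euclidean_space set"
  assumes "convex X" "closed X" "X \<noteq> {}" "z \<in> X"
  shows "norm (proj X (z - a *\<^sub>R d) - z) \<le> \<bar>a\<bar> * norm d"
  using proj_nonexpansive[OF assms(1-3), of "z - a *\<^sub>R d" z] proj_self[OF assms(4)] by simp

lemma proj_step_sq_dist_le:
  fixes X :: "'a::euclidean_space set"
  assumes "convex X" "closed X" "X \<noteq> {}" "y \<in> X"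
  shows "(norm (proj X (z - a *\<^sub>R d) - y))\<^sup>2
    \<le> (norm (z - y))\<^sup>2 - 2 * a * (d \<bullet> (z - y)) + a\<^sup>2 * (norm d)\<^sup>2"
proof -
  have "norm (proj X (z - a *\<^sub>R d) - y) \<le> norm ((z - y) - a *\<^sub>R d)"
    using proj_nonexpansive[OF assms(1-3), of "z - a *\<^sub>R d" y] proj_self[OF assms(4)]
    by (simp add: algebra_simps)
  then have "(norm (proj X (z - a *\<^sub>R d) - y))\<^sup>2 \<le> (norm ((z - y) - a *\<^sub>R d))\<^sup>2"
    by (simp add: power_mono)
  also have "\<dots> = (norm (z - y))\<^sup>2 - 2 * a * (d \<bullet> (z - y)) + a\<^sup>2 * (norm d)\<^sup>2"
    unfolding power2_norm_eq_inner
    by (simp add: inner_diff_left inner_diff_right inner_commute power2_eq_square algebra_simps)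
  finally show ?thesis .
qed

lemma norm_average_squared_le:
  fixes v :: "'i \<Rightarrow> 'a::real_normed_vector"
  assumes "finite A" "A \<noteq> {}"
  shows "(norm ((1 / real (card A)) *\<^sub>R (\<Sum>j\<in>A. v j)))\<^sup>2 \<le> (\<Sum>j\<in>A. (norm (v j))\<^sup>2) / real (card A)"
proof -
  have n: "real (card A) > 0" using assms by (simp add: card_gt_0_iff)
  have "norm ((1 / real (card A)) *\<^sub>R (\<Sum>j\<in>A. v j)) \<le> (\<Sum>j\<in>A. norm (v j)) / real (card A)"
    using norm_sum[of v A] n by (simp add: divide_right_mono)
  then have "(norm ((1 / real (card A)) *\<^sub>R (\<Sum>j\<in>A. v j)))\<^sup>2 \<le> ((\<Sum>j\<in>A. norm (v j)) / real (card A))\<^sup>2"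
    by (rule power_mono) simp
  also have "\<dots> = (\<Sum>j\<in>A. norm (v j))\<^sup>2 / (real (card A))\<^sup>2"
    by (rule power_divide)
  also have "\<dots> \<le> (\<Sum>j\<in>A. (norm (v j))\<^sup>2) * real (card A) / (real (card A))\<^sup>2"
    by (simp add: divide_right_mono sum_squared_le_sum_of_squares)
  finally show ?thesis using n by (simp add: power2_eq_square)
qed

lemma average_in_convex:
  assumes "convex X" "finite A" "A \<noteq> {}" "\<And>j. j \<in> A \<Longrightarrow> v j \<in> X"
  shows "(1 / real (card A)) *\<^sub>R (\<Sum>j\<in>A. v j) \<in> X"
proof -
  have "(\<Sum>j\<in>A. (1 / real (card A)) *\<^sub>R v j) \<in> X"
    using assms by (intro convex_sum) (auto simp: card_gt_0_iff)
  then show ?thesis by (simp add: scaleR_sum_right)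
qed

lemma average_sq_dist_le:
  fixes v :: "'i \<Rightarrow> 'a::real_normed_vector"
  assumes "finite A" "A \<noteq> {}"
    and bound: "\<And>j. j \<in> A \<Longrightarrow> (norm (v j - y))\<^sup>2 \<le> R - 2 * a * E j + a\<^sup>2 * Q j"
  shows "(norm ((1 / real (card A)) *\<^sub>R (\<Sum>j\<in>A. v j) - y))\<^sup>2
    \<le> R - 2 * a / real (card A) * (\<Sum>j\<in>A. E j) + 1 / real (card A) * a\<^sup>2 * (\<Sum>j\<in>A. Q j)"
proof -
  have n: "real (card A) > 0" using assms(1,2) by (simp add: card_gt_0_iff)
  have "(1 / real (card A)) *\<^sub>R (\<Sum>j\<in>A. v j) - y = (1 / real (card A)) *\<^sub>R (\<Sum>j\<in>A. v j - y)"
    using n by (simp add: sum_subtractf scaleR_diff_right sum_constant_scaleR)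
  then have "(norm ((1 / real (card A)) *\<^sub>R (\<Sum>j\<in>A. v j) - y))\<^sup>2
      \<le> (\<Sum>j\<in>A. (norm (v j - y))\<^sup>2) / real (card A)"
    using norm_average_squared_le[OF assms(1,2), of "\<lambda>j. v j - y"] by simp
  also have "\<dots> \<le> (\<Sum>j\<in>A. R - 2 * a * E j + a\<^sup>2 * Q j) / real (card A)"
    using n bound by (intro divide_right_mono sum_mono) auto
  also have "\<dots> = R - 2 * a / real (card A) * (\<Sum>j\<in>A. E j) + 1 / real (card A) * a\<^sup>2 * (\<Sum>j\<in>A. Q j)"
    using n by (simp add: sum.distrib sum_subtractf sum_distrib_left sum_distrib_right field_simps)
  finally show ?thesis .
qed

lemma projected_weighted_gradient_step:
  fixes X :: "'a::euclidean_space set"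
  assumes X: "convex X" "closed X" "X \<noteq> {}" and "finite H"
    and convex: "\<And>h. h \<in> H \<Longrightarrow> convex_on UNIV (f h)"
    and deriv: "\<And>h u. h \<in> H \<Longrightarrow> (f h has_derivative (\<lambda>v. g h u \<bullet> v)) (at u)"
    and bound: "\<And>h u. h \<in> H \<Longrightarrow> u \<in> X \<Longrightarrow> norm (g h u) \<le> L h"
    and w: "\<And>h. h \<in> H \<Longrightarrow> w h \<ge> 0" and a: "a \<ge> 0"
    and "y \<in> X" "c \<in> X" "z \<in> X" and zc: "norm (z - c) \<le> r"
  defines "b \<equiv> \<Sum>h\<in>H. w h * L h"
  shows "norm (proj X (z - a *\<^sub>R (\<Sum>h\<in>H. w h *\<^sub>R g h z)) - c) \<le> r + a * b"
    and "(norm (proj X (z - a *\<^sub>R (\<Sum>h\<in>H. w h *\<^sub>R g h z)) - y))\<^sup>2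
      \<le> (norm (z - y))\<^sup>2 - 2 * a * (\<Sum>h\<in>H. w h * (f h c - f h y)) + a\<^sup>2 * b\<^sup>2 + 2 * a * b * r"
proof -
  define d where "d = (\<Sum>h\<in>H. w h *\<^sub>R g h z)"
  have "norm d \<le> (\<Sum>h\<in>H. norm (w h *\<^sub>R g h z))"
    unfolding d_def by (rule norm_sum)
  also have "\<dots> \<le> b"
    unfolding b_def using w bound \<open>z \<in> X\<close> by (auto intro!: sum_mono mult_left_mono)
  finally have d: "norm d \<le> b" .
  have "norm (proj X (z - a *\<^sub>R d) - c) \<le> norm (proj X (z - a *\<^sub>R d) - z) + norm (z - c)"
    using norm_triangle_ineq[of "proj X (z - a *\<^sub>R d) - z" "z - c"] by simp
  also have "\<dots> \<le> a * b + r"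
    using proj_step_dist_le[OF X \<open>z \<in> X\<close>, of a d] mult_left_mono[OF d a] zc a by simp
  finally show "norm (proj X (z - a *\<^sub>R (\<Sum>h\<in>H. w h *\<^sub>R g h z)) - c) \<le> r + a * b"
    by (simp add: d_def)
  have "(\<Sum>h\<in>H. w h * (f h c - f h y)) - b * r \<le> (\<Sum>h\<in>H. w h * (g h z \<bullet> (z - y)))"
  proof -
    have "w h * (f h c - f h y) - w h * L h * r \<le> w h * (g h z \<bullet> (z - y))" if h: "h \<in> H" for h
    proof -
      have "f h c - f h y - L h * norm (z - c) \<le> g h z \<bullet> (z - y)"
        using gradient_inner_ge_gap[OF convex[OF h] deriv[OF h] bound[OF h \<open>c \<in> X\<close>]] .
      moreover have "L h * norm (z - c) \<le> L h * r"
        using bound[OF h \<open>c \<in> X\<close>] zc by (meson mult_left_mono norm_ge_zero order_trans)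
      ultimately have "f h c - f h y - L h * r \<le> g h z \<bullet> (z - y)"
        by linarith
      from mult_left_mono[OF this w[OF h]] show ?thesis
        by (simp add: algebra_simps)
    qed
    then show ?thesis
      unfolding b_def by (simp add: sum_distrib_right sum_subtractf[symmetric] sum_mono)
  qed
  then have gap: "(\<Sum>h\<in>H. w h * (f h c - f h y)) - b * r \<le> d \<bullet> (z - y)"
    by (simp add: d_def inner_sum_left)
  have "(norm (proj X (z - a *\<^sub>R d) - y))\<^sup>2 \<le> (norm (z - y))\<^sup>2 - 2 * a * (d \<bullet> (z - y)) + a\<^sup>2 * (norm d)\<^sup>2"
    by (rule proj_step_sq_dist_le[OF X \<open>y \<in> X\<close>])
  moreover have "a\<^sup>2 * (norm d)\<^sup>2 \<le> a\<^sup>2 * b\<^sup>2"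
    using d by (simp add: mult_left_mono power_mono)
  moreover have "2 * a * ((\<Sum>h\<in>H. w h * (f h c - f h y)) - b * r) \<le> 2 * a * (d \<bullet> (z - y))"
    using gap a by (simp add: mult_left_mono)
  ultimately show "(norm (proj X (z - a *\<^sub>R (\<Sum>h\<in>H. w h *\<^sub>R g h z)) - y))\<^sup>2
      \<le> (norm (z - y))\<^sup>2 - 2 * a * (\<Sum>h\<in>H. w h * (f h c - f h y)) + a\<^sup>2 * b\<^sup>2 + 2 * a * b * r"
    unfolding d_def by (simp add: algebra_simps)
qed

lemma projected_weighted_gradient_round:
  fixes X :: "'a::euclidean_space set" and z :: "nat \<Rightarrow> 'a"
  assumes X: "convex X" "closed X" "X \<noteq> {}" and H: "finite H"
    and convex: "\<And>h. h \<in> H \<Longrightarrow> convex_on UNIV (f h)"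
    and deriv: "\<And>h u. h \<in> H \<Longrightarrow> (f h has_derivative (\<lambda>v. g h u \<bullet> v)) (at u)"
    and bound: "\<And>h u. h \<in> H \<Longrightarrow> u \<in> X \<Longrightarrow> norm (g h u) \<le> L h"
    and w: "\<And>i h. i < n \<Longrightarrow> h \<in> H \<Longrightarrow> w i h \<ge> 0" and a: "a \<ge> 0"
    and "y \<in> X" "z 0 \<in> X"
    and step: "\<And>i. i < n \<Longrightarrow> z (Suc i) = proj X (z i - a *\<^sub>R (\<Sum>h\<in>H. w i h *\<^sub>R g h (z i)))"
  defines "B \<equiv> \<lambda>i. \<Sum>h\<in>H. w (i - 1) h * L h"
  shows "(norm (z n - y))\<^sup>2 \<le> (norm (z 0 - y))\<^sup>2
      - 2 * a * (\<Sum>i=1..n. \<Sum>h\<in>H. w (i - 1) h * (f h (z 0) - f h y))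
      + a\<^sup>2 * (\<Sum>i=1..n. (B i)\<^sup>2 + 2 * B i * (\<Sum>t=1..i-1. B t))"
proof -
  define E where "E i = (\<Sum>h\<in>H. w (i - 1) h * (f h (z 0) - f h y))" for i
  define Q where "Q m = (\<Sum>i=1..m. (B i)\<^sup>2 + 2 * B i * (\<Sum>t=1..i-1. B t))" for m
  have "m \<le> n \<longrightarrow> z m \<in> X \<and> norm (z m - z 0) \<le> a * (\<Sum>t=1..m. B t)
      \<and> (norm (z m - y))\<^sup>2 \<le> (norm (z 0 - y))\<^sup>2 - 2 * a * (\<Sum>i=1..m. E i) + a\<^sup>2 * Q m" for m
  proof (induction m)
    case 0
    show ?case using \<open>z 0 \<in> X\<close> by (simp add: Q_def)
  next
    case (Suc m)
    show ?case
    proof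
      assume m: "Suc m \<le> n"
      define P where "P = (\<Sum>t=1..m. B t)"
      with Suc.IH m have zX: "z m \<in> X" and dist: "norm (z m - z 0) \<le> a * P"
        and sq: "(norm (z m - y))\<^sup>2 \<le> (norm (z 0 - y))\<^sup>2 - 2 * a * (\<Sum>i=1..m. E i) + a\<^sup>2 * Q m"
        by auto
      have wm: "\<And>h. h \<in> H \<Longrightarrow> w m h \<ge> 0" using w m by simp
      have z_Suc: "z (Suc m) = proj X (z m - a *\<^sub>R (\<Sum>h\<in>H. w m h *\<^sub>R g h (z m)))"
        using step m by simp
      have b: "B (Suc m) = (\<Sum>h\<in>H. w m h * L h)" and e: "E (Suc m) = (\<Sum>h\<in>H. w m h * (f h (z 0) - f h y))"
        by (simp_all add: B_def E_def)
      note one_step = projected_weighted_gradient_step[where f=f and g=g and L=L and w="w m",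
          OF X H _ _ _ wm a \<open>y \<in> X\<close> \<open>z 0 \<in> X\<close> zX dist, folded z_Suc b e]
      have "z (Suc m) \<in> X"
        using z_Suc proj_in[OF X(2,3)] by simp
      moreover have "norm (z (Suc m) - z 0) \<le> a * (\<Sum>t=1..Suc m. B t)"
        using one_step(1) convex deriv bound by (simp add: P_def algebra_simps)
      moreover have "(norm (z (Suc m) - y))\<^sup>2
          \<le> (norm (z 0 - y))\<^sup>2 - 2 * a * (\<Sum>i=1..Suc m. E i) + a\<^sup>2 * Q (Suc m)"
      proof -
        have "Q (Suc m) = Q m + (B (Suc m))\<^sup>2 + 2 * B (Suc m) * P"
          by (simp add: Q_def P_def)
        then have "a\<^sup>2 * Q (Suc m) = a\<^sup>2 * Q m + a\<^sup>2 * (B (Suc m))\<^sup>2 + 2 * a * B (Suc m) * (a * P)"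
          by (simp add: algebra_simps power2_eq_square)
        moreover have "(norm (z (Suc m) - y))\<^sup>2
            \<le> (norm (z m - y))\<^sup>2 - 2 * a * E (Suc m) + a\<^sup>2 * (B (Suc m))\<^sup>2 + 2 * a * B (Suc m) * (a * P)"
          using one_step(2) convex deriv bound by blast
        ultimately show ?thesis
          using sq by (simp add: algebra_simps)
      qed
      ultimately show "z (Suc m) \<in> X \<and> norm (z (Suc m) - z 0) \<le> a * (\<Sum>t=1..Suc m. B t)
          \<and> (norm (z (Suc m) - y))\<^sup>2 \<le> (norm (z 0 - y))\<^sup>2 - 2 * a * (\<Sum>i=1..Suc m. E i) + a\<^sup>2 * Q (Suc m)"
        by blast
    qed
  qed
  then show ?thesis by (simp add: E_def Q_def)
qed

lemma sum_weighted_by_total_weight: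
  fixes w :: "'i \<Rightarrow> 'j \<Rightarrow> 'h \<Rightarrow> real"
  assumes "\<And>h. h \<in> H \<Longrightarrow> (\<Sum>i\<in>I. \<Sum>j\<in>A. w i j h) = M"
  shows "(\<Sum>j\<in>A. \<Sum>i\<in>I. \<Sum>h\<in>H. w i j h * u h) = M * (\<Sum>h\<in>H. u h)"
proof -
  have "(\<Sum>j\<in>A. \<Sum>i\<in>I. \<Sum>h\<in>H. w i j h * u h) = (\<Sum>j\<in>A. \<Sum>h\<in>H. \<Sum>i\<in>I. w i j h * u h)"
    by (rule sum.cong[OF refl], rule sum.swap)
  also have "\<dots> = (\<Sum>h\<in>H. \<Sum>j\<in>A. \<Sum>i\<in>I. w i j h * u h)"
    by (rule sum.swap)
  also have "\<dots> = (\<Sum>h\<in>H. \<Sum>i\<in>I. \<Sum>j\<in>A. w i j h * u h)"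
    by (rule sum.cong[OF refl], rule sum.swap)
  also have "\<dots> = (\<Sum>h\<in>H. (\<Sum>i\<in>I. \<Sum>j\<in>A. w i j h) * u h)"
    by (simp add: sum_distrib_right)
  also have "\<dots> = M * (\<Sum>h\<in>H. u h)"
    by (simp add: assms sum_distrib_left)
  finally show ?thesis .
qed

theorem lemma6:
  fixes S C \<Delta> :: nat
    and X :: "'a::euclidean_space set"
    and fh :: "nat \<Rightarrow> 'a \<Rightarrow> real"
    and g :: "nat \<Rightarrow> 'a \<Rightarrow> 'a"
    and L :: "nat \<Rightarrow> real"
    and W :: "nat \<Rightarrow> nat \<Rightarrow> nat \<Rightarrow> nat \<Rightarrow> real"
    and M :: real
    and \<alpha> :: "nat \<Rightarrow> real"
    and x :: "nat \<Rightarrow> nat \<Rightarrow> nat \<Rightarrow> 'a"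
    and x00 :: 'a
  assumes S1: "S \<ge> 1" and C1: "C \<ge> 1" and D1: "\<Delta> \<ge> 1"
    and Xne: "X \<noteq> {}" and Xconv: "convex X" and Xcomp: "compact X"
    and fconv: "\<And>h. h \<in> {1..C} \<Longrightarrow> convex_on UNIV (fh h)"
    and fderiv: "\<And>h z. h \<in> {1..C} \<Longrightarrow> (fh h has_derivative (\<lambda>v. g h z \<bullet> v)) (at z)"
    and gcont: "\<And>h. h \<in> {1..C} \<Longrightarrow> continuous_on UNIV (g h)"
    and gbound: "\<And>h z. h \<in> {1..C} \<Longrightarrow> z \<in> X \<Longrightarrow> norm (g h z) \<le> L h"
    and Wnn: "\<And>i k J h. i < \<Delta> \<Longrightarrow> J \<in> {1..S} \<Longrightarrow> h \<in> {1..C} \<Longrightarrow> W i k J h \<ge> 0"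
    and Mpos: "M > 0"
    and SLC: "\<And>k h. h \<in> {1..C} \<Longrightarrow> (\<Sum>i=1..\<Delta>. \<Sum>J=1..S. W (i-1) k J h) = M"
    and alpha_pos: "\<And>k. \<alpha> k > 0"
    and local_step: "\<And>J i k. J \<in> {1..S} \<Longrightarrow> i \<in> {1..\<Delta>} \<Longrightarrow>
        x J i k = proj X (x J (i-1) k - \<alpha> k *\<^sub>R (\<Sum>h=1..C. W (i-1) k J h *\<^sub>R g h (x J (i-1) k)))"
    and consensus: "\<And>I k. I \<in> {1..S} \<Longrightarrow>
        x I 0 (Suc k) = (1 / real S) *\<^sub>R (\<Sum>J=1..S. x J \<Delta> k)"
    and init: "x00 \<in> X" "\<And>J. J \<in> {1..S} \<Longrightarrow> x J 0 0 = x00"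
  shows "\<forall>y\<in>X. \<forall>k. \<forall>J\<in>{1..S}.
     (norm (x J 0 (Suc k) - y))^2
       \<le> (norm (x J 0 k - y))^2
          - 2 * M / real S * \<alpha> k * ((\<Sum>h=1..C. fh h (x J 0 k)) - (\<Sum>h=1..C. fh h y))
          + 1 / real S * (\<alpha> k)^2 * C0sq S C \<Delta> W L k"
proof (intro ballI allI)
  fix y k J
  assume y: "y \<in> X" and J: "J \<in> {1..S}"
  have Xclosed: "closed X" using Xcomp by (rule compact_imp_closed)
  define c where "c = x J 0 k"
  have start: "x I 0 k = c" if "I \<in> {1..S}" for I
    using that J init consensus by (cases k) (simp_all add: c_def)
  have c: "c \<in> X"
  proof (cases k)
    case 0
    then show ?thesis using init J by (simp add: c_def)
  next
    case (Suc k')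
    have "x I \<Delta> k' \<in> X" if "I \<in> {1..S}" for I
      using local_step[OF that, of \<Delta>] proj_in[OF Xclosed Xne] D1 by simp
    then show ?thesis
      using average_in_convex[OF Xconv, of "{1..S}" "\<lambda>I. x I \<Delta> k'"] consensus[OF J] Suc S1
      by (simp add: c_def)
  qed
  define gap where "gap I = (\<Sum>i=1..\<Delta>. \<Sum>h=1..C. W (i-1) k I h * (fh h c - fh h y))" for I
  define Q where "Q I = (\<Sum>i=1..\<Delta>. (\<Sum>h=1..C. W (i-1) k I h * L h)^2
        + 2 * (\<Sum>h=1..C. W (i-1) k I h * L h) * (\<Sum>t=1..i-1. \<Sum>l=1..C. W (t-1) k I l * L l))" for I
  have round: "(norm (x I \<Delta> k - y))\<^sup>2 \<le> (norm (c - y))\<^sup>2 - 2 * \<alpha> k * gap I + (\<alpha> k)\<^sup>2 * Q I"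
    if I: "I \<in> {1..S}" for I
    using projected_weighted_gradient_round[where X=X and H="{1..C}" and f=fh and g=g and L=L
        and w="\<lambda>i h. W i k I h" and a="\<alpha> k" and z="\<lambda>i. x I i k" and n=\<Delta>,
        OF Xconv Xclosed Xne _ fconv fderiv gbound Wnn[OF _ I] _ y] start[OF I] c local_step[OF I]
      alpha_pos[of k]
    by (simp add: gap_def Q_def less_imp_le)
  have "(norm (x J 0 (Suc k) - y))\<^sup>2 \<le> (norm (c - y))\<^sup>2
      - 2 * \<alpha> k / real S * (\<Sum>I=1..S. gap I) + 1 / real S * (\<alpha> k)\<^sup>2 * (\<Sum>I=1..S. Q I)"
    using average_sq_dist_le[of "{1..S}" "\<lambda>I. x I \<Delta> k", OF _ _ round] consensus[OF J] S1 by simp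
  also have "(\<Sum>I=1..S. gap I) = M * (\<Sum>h=1..C. fh h c - fh h y)"
    unfolding gap_def by (rule sum_weighted_by_total_weight) (rule SLC)
  also have "\<dots> = M * ((\<Sum>h=1..C. fh h c) - (\<Sum>h=1..C. fh h y))"
    by (simp add: sum_subtractf)
  also have "(\<Sum>I=1..S. Q I) = C0sq S C \<Delta> W L k"
    by (simp add: C0sq_def Q_def)
  finally show "(norm (x J 0 (Suc k) - y))\<^sup>2 \<le> (norm (x J 0 k - y))\<^sup>2
      - 2 * M / real S * \<alpha> k * ((\<Sum>h=1..C. fh h (x J 0 k)) - (\<Sum>h=1..C. fh h y))
      + 1 / real S * (\<alpha> k)\<^sup>2 * C0sq S C \<Delta> W L k"
    by (simp add: c_def algebra_simps)
qed

end
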